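(* Let $\mathcal M=(\mathbf M^{(\lambda)})_{\lambda>0}$ be a weight matrix on $\mathbb N_0^d$ such that for every $\lambda>0$ there exist $0<\kappa\le\lambda$ and $A\ge1$ with $M^{(\kappa)}_{\alpha+e_j}\le A^{|\alpha|+1}M^{(\lambda)}_\alpha$ for all $\alpha\in\mathbb N_0^d$ and $1\le j\le d$. Then the sequence space $\Lambda_{(\mathcal M)}$ is nuclear.
   Context: A weight matrix is a family $\mathcal M=(\mathbf M^{(\lambda)})_{\lambda>0}$ with $\mathbf M^{(\lambda)}=(M^{(\lambda)}_\alpha)_{\alpha\in\mathbb N_0^d}$ sequences of positive reals, $M^{(\lambda)}_0=1$, and $M^{(\lambda)}_\alpha\le M^{(\kappa)}_\alpha$ for all $\alpha$ whenever $0<\lambda\le\kappa$. $e_j$ denotes the $j$-th unit vector, $|\alpha|=\sum\alpha_j$. The associated weight function of $\mathbf M=(M_\alpha)$ is $\omega_{\mathbf M}(t)=\sup_{\alpha\in\mathbb N^d_{0,t}}\log\frac{|t^\alpha|}{M_\alpha}$ ($t\in\mathbb R^d$), where $\mathbb N^d_{0,t}=\{\alpha:\alpha_j=0\text{ whenever }t_j=0\}$ and $0^0:=1$. With $\alpha^{1/2}=(\alpha_1^{1/2},\dots,\alpha_d^{1/2})$ and $\|\mathbf c\|_{\mathbf M,h}:=\sup_\alpha|c_\alpha|e^{\omega_{\mathbf M}(\alpha^{1/2}/h)}$, $\Lambda_{(\mathcal M)}$ is the space of $\mathbf c\in\mathbb C^{\mathbb N_0^d}$ with $\|\mathbf c\|_{\mathbf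 M^{(\lambda)},h}<\infty$ for all $\lambda,h>0$, with the Fréchet topology given by the norms $\|\cdot\|_{\mathbf M^{(1/j)},1/j}$, $j\in\mathbb N$. *)

theory Defs
  imports Complex_Main "HOL-Library.Extended_Real"
begin

text \<open>Multi-indices in N_0^d are functions 'd => nat for a finite index type 'd
  (d = CARD('d)).  A weight matrix is M :: real => ('d => nat) => real,
  where M lam is the sequence M^(lam).\<close>

definition mi_length :: "('d::finite \<Rightarrow> nat) \<Rightarrow> nat" where
  "mi_length \<alpha> = (\<Sum>j\<in>UNIV. \<alpha> j)"

definition weight_matrix :: "(real \<Rightarrow> ('d::finite \<Rightarrow> nat) \<Rightarrow> real) \<Rightarrow> bool" where
  "weight_matrix M \<longleftrightarrow>
     (\<forall>lam>0. (\<forall>\<alpha>. M lam \<alpha> > 0) \<and> M lam (\<lambda>_. 0) = 1) \<and>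
     (\<forall>lam kap \<alpha>. 0 < lam \<longrightarrow> lam \<le> kap \<longrightarrow> M lam \<alpha> \<le> M kap \<alpha>)"

text \<open>Associated weight function omega_M(t) = sup over beta in N^d_{0,t} of
  log(|t^beta| / M_beta), with 0^0 = 1; extended-real valued since the
  supremum may be infinite.\<close>

definition assoc_weight :: "(('d::finite \<Rightarrow> nat) \<Rightarrow> real) \<Rightarrow> ('d \<Rightarrow> real) \<Rightarrow> ereal" where
  "assoc_weight Ms t =
     (SUP \<beta>\<in>{\<beta>. \<forall>j. t j = 0 \<longrightarrow> \<beta> j = 0}.
        ereal (ln ((\<Prod>j\<in>UNIV. \<bar>t j\<bar> ^ \<beta> j) / Ms \<beta>)))"

definition exp_ereal :: "ereal \<Rightarrow> ereal" where
  "exp_ereal x = (case x of ereal r \<Rightarrow> ereal (exp r) | PInfty \<Rightarrow> \<infinity> | MInfty \<Rightarrow> 0)"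

definition seq_norm :: "(('d::finite \<Rightarrow> nat) \<Rightarrow> real) \<Rightarrow> real \<Rightarrow> (('d \<Rightarrow> nat) \<Rightarrow> complex) \<Rightarrow> ereal" where
  "seq_norm Ms h c =
     (SUP \<alpha>. ereal (cmod (c \<alpha>)) *
        exp_ereal (assoc_weight Ms (\<lambda>j. sqrt (real (\<alpha> j)) / h)))"

definition Lambda_space :: "(real \<Rightarrow> ('d::finite \<Rightarrow> nat) \<Rightarrow> real) \<Rightarrow> (('d \<Rightarrow> nat) \<Rightarrow> complex) set" where
  "Lambda_space M = {c. \<forall>lam>0. \<forall>h>0. seq_norm (M lam) h c < \<infinity>}"

text \<open>Fundamental system of norms ||.||_{M^(1/j),1/j}, j = 1,2,... (indexed by n with j = n+1).\<close>

definition Lambda_norm :: "(real \<Rightarrow> ('d::finite \<Rightarrow> nat) \<Rightarrow> real) \<Rightarrow> nat \<Rightarrow> (('d \<Rightarrow> nat) \<Rightarrow> complex) \<Rightarrow> real" where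
  "Lambda_norm M n c = real_of_ereal (seq_norm (M (1 / real (Suc n))) (1 / real (Suc n)) c)"

text \<open>Nuclearity (Grothendieck/Pietsch, e.g. Meise-Vogt Def. 28.1) of a locally convex
  space E of sequences whose topology is given by an increasing fundamental sequence
  of seminorms p: for every n there is m such that the canonical map from the local
  Banach space E_{p m} to the completion of E_{p n} is nuclear.  Nuclearity of this
  canonical map is expressed intrinsically: there are linear functionals f k on E with
  |f k x| <= C k * p m x and vectors z k in E with sum_k C k * p n (z k) < infinity
  and x = sum_k f k x z k in the seminorm p n for every x in E.  (Every element of the
  completion is an absolutely p n-convergent series of elements of E, so this is
  equivalent to the usual formulation with vectors in the completion.)\<close>

definition canonical_map_nuclear ::
  "('i \<Rightarrow> complex) set \<Rightarrow> (('i \<Rightarrow> complex) \<Rightarrow> real) \<Rightarrow> (('i \<Rightarrow> complex) \<Rightarrow> real) \<Rightarrow> bool" where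
  "canonical_map_nuclear E p q \<longleftrightarrow>
     (\<exists>(f :: nat \<Rightarrow> ('i \<Rightarrow> complex) \<Rightarrow> complex) (z :: nat \<Rightarrow> 'i \<Rightarrow> complex) (C :: nat \<Rightarrow> real).
        (\<forall>k. \<forall>x\<in>E. \<forall>y\<in>E. f k (\<lambda>i. x i + y i) = f k x + f k y) \<and>
        (\<forall>k. \<forall>a. \<forall>x\<in>E. f k (\<lambda>i. a * x i) = a * f k x) \<and>
        (\<forall>k. \<forall>x\<in>E. cmod (f k x) \<le> C k * q x) \<and>
        (\<forall>k. z k \<in> E) \<and>
        summable (\<lambda>k. C k * p (z k)) \<and>
        (\<forall>x\<in>E. (\<lambda>N. p (\<lambda>i. x i - (\<Sum>k<N. f k x * z k i))) \<longlonglongrightarrow> 0))"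

definition nuclear_seq_space ::
  "('i \<Rightarrow> complex) set \<Rightarrow> (nat \<Rightarrow> ('i \<Rightarrow> complex) \<Rightarrow> real) \<Rightarrow> bool" where
  "nuclear_seq_space E p \<longleftrightarrow> (\<forall>n. \<exists>m\<ge>n. canonical_map_nuclear E (p n) (p m))"

end

theory Submission
  imports Defs "HOL-Analysis.Analysis"
begin

text \<open>The norms of \<open>\<Lambda>_(M)\<close> are weighted sup norms with weights
  \<open>w_n(\<alpha>) = exp \<omega>_(M^(1/n))(n \<alpha>^(1/2))\<close>. In the quotients \<open>|t^\<beta>| / M_\<beta>\<close> defining
  \<open>\<omega>\<close>, one application of the shift condition pays for a factor \<open>max 1 (|t_j| / A)\<close> with
  the shifted index \<open>\<beta> + e_j\<close>; applying it \<open>4d\<close> times shows that for every \<open>n\<close> there is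
  \<open>m \<ge> n\<close> with \<open>\<Prod>_j ((1 + \<alpha>_j) / 2)^2 w_n(\<alpha>) \<le> w_m(\<alpha>)\<close>. Since
  \<open>\<Sum>_\<alpha> \<Prod>_j 4 / (1 + \<alpha>_j)^2 < \<infinity>\<close>, the expansion \<open>x = \<Sum>_\<alpha> x_\<alpha> e_\<alpha>\<close> along the unit
  vectors then makes the canonical map from the \<open>m\<close>-th to the \<open>n\<close>-th local Banach space
  nuclear.\<close>

section \<open>Associated weight functions\<close>

definition admissible_index :: "('d::finite \<Rightarrow> real) \<Rightarrow> ('d \<Rightarrow> nat) \<Rightarrow> bool" where
  "admissible_index t \<beta> \<longleftrightarrow> (\<forall>j. t j = 0 \<longrightarrow> \<beta> j = 0)"

definition weight_quotient :: "(('d::finite \<Rightarrow> nat) \<Rightarrow> real) \<Rightarrow> ('d \<Rightarrow> real) \<Rightarrow> ('d \<Rightarrow> nat) \<Rightarrow> real" where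
  "weight_quotient Ms t \<beta> = (\<Prod>j\<in>UNIV. \<bar>t j\<bar> ^ \<beta> j) / Ms \<beta>"

definition exp_assoc_weight :: "(('d::finite \<Rightarrow> nat) \<Rightarrow> real) \<Rightarrow> ('d \<Rightarrow> real) \<Rightarrow> ereal" where
  "exp_assoc_weight Ms t = exp_ereal (assoc_weight Ms t)"

lemma weight_matrix_pos: "weight_matrix M \<Longrightarrow> 0 < lam \<Longrightarrow> 0 < M lam \<beta>"
  and weight_matrix_zero: "weight_matrix M \<Longrightarrow> 0 < lam \<Longrightarrow> M lam (\<lambda>_. 0) = 1"
  and weight_matrix_mono: "weight_matrix M \<Longrightarrow> 0 < lam \<Longrightarrow> lam \<le> kap \<Longrightarrow> M lam \<beta> \<le> M kap \<beta>"
  unfolding weight_matrix_def by blast+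

lemma exp_ereal_mono: "x \<le> y \<Longrightarrow> exp_ereal x \<le> exp_ereal y"
  by (cases x; cases y) (auto simp: exp_ereal_def)

lemma exp_ereal_add_ereal: "exp_ereal (x + ereal c) = ereal (exp c) * exp_ereal x"
  by (cases x) (auto simp: exp_ereal_def exp_add)

lemma exp_ereal_nonneg: "0 \<le> exp_ereal x"
  by (cases x) (auto simp: exp_ereal_def)

lemma assoc_weight_eq_SUP_weight_quotient:
  "assoc_weight Ms t = (SUP \<beta>\<in>Collect (admissible_index t). ereal (ln (weight_quotient Ms t \<beta>)))"
  unfolding assoc_weight_def admissible_index_def weight_quotient_def by simp

lemma weight_quotient_pos:
  assumes "admissible_index t \<beta>" "0 < Ms \<beta>"
  shows "0 < weight_quotient Ms t \<beta>"
  using assms unfolding weight_quotient_def admissible_index_def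
  by (intro divide_pos_pos prod_pos) (auto simp: zero_less_power_eq)

lemma weight_quotient_nonneg: "0 < Ms \<beta> \<Longrightarrow> 0 \<le> weight_quotient Ms t \<beta>"
  unfolding weight_quotient_def by (intro divide_nonneg_pos prod_nonneg) auto

lemma weight_quotient_mono:
  assumes "\<And>j. \<bar>s j\<bar> \<le> \<bar>t j\<bar>" "0 < Ms \<beta>"
  shows "weight_quotient Ms s \<beta> \<le> weight_quotient Ms t \<beta>"
  unfolding weight_quotient_def using assms
  by (intro divide_right_mono prod_mono conjI power_mono) auto

lemma weight_quotient_antimono_weight:
  assumes "0 < Ms' \<beta>" "Ms' \<beta> \<le> Ms \<beta>"
  shows "weight_quotient Ms t \<beta> \<le> weight_quotient Ms' t \<beta>"
  unfolding weight_quotient_def using assms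
  by (intro divide_left_mono prod_nonneg mult_pos_pos) auto

lemma exp_assoc_weight_ge_1:
  assumes "Ms (\<lambda>_. 0) = 1"
  shows "1 \<le> exp_assoc_weight Ms t"
proof -
  have "ereal (ln (weight_quotient Ms t (\<lambda>_. 0))) \<le> assoc_weight Ms t"
    unfolding assoc_weight_eq_SUP_weight_quotient
    by (rule SUP_upper) (simp add: admissible_index_def)
  then have "0 \<le> assoc_weight Ms t"
    using assms by (simp add: weight_quotient_def zero_ereal_def)
  then have "exp_ereal 0 \<le> exp_assoc_weight Ms t"
    unfolding exp_assoc_weight_def by (rule exp_ereal_mono)
  then show ?thesis
    by (simp add: exp_ereal_def zero_ereal_def one_ereal_def)
qed

lemma exp_assoc_weight_scaled_le:
  assumes F: "0 < F" and pos: "\<And>\<beta>. 0 < Ms \<beta>"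
    and dom: "\<And>\<beta>. admissible_index s \<beta> \<Longrightarrow>
      \<exists>\<gamma>. admissible_index t \<gamma> \<and> F * weight_quotient Ms s \<beta> \<le> weight_quotient Ms' t \<gamma>"
  shows "ereal F * exp_assoc_weight Ms s \<le> exp_assoc_weight Ms' t"
proof -
  have "assoc_weight Ms s + ereal (ln F) \<le> assoc_weight Ms' t"
  proof -
    have "ereal (ln (weight_quotient Ms s \<beta>)) \<le> assoc_weight Ms' t - ereal (ln F)"
      if adm: "admissible_index s \<beta>" for \<beta>
    proof -
      obtain \<gamma> where \<gamma>: "admissible_index t \<gamma>" "F * weight_quotient Ms s \<beta> \<le> weight_quotient Ms' t \<gamma>"
        using dom[OF adm] by blast
      have q: "0 < weight_quotient Ms s \<beta>"
        using weight_quotient_pos[OF adm pos] .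
      have "ln F + ln (weight_quotient Ms s \<beta>) = ln (F * weight_quotient Ms s \<beta>)"
        using F q by (simp add: ln_mult)
      also have "\<dots> \<le> ln (weight_quotient Ms' t \<gamma>)"
        using \<gamma>(2) F q by (intro ln_mono) auto
      finally have "ln (weight_quotient Ms s \<beta>) \<le> ln (weight_quotient Ms' t \<gamma>) - ln F"
        by simp
      moreover have "ereal (ln (weight_quotient Ms' t \<gamma>)) \<le> assoc_weight Ms' t"
        unfolding assoc_weight_eq_SUP_weight_quotient using \<gamma>(1) by (auto intro: SUP_upper)
      ultimately show ?thesis
        by (cases "assoc_weight Ms' t") auto
    qed
    then have "assoc_weight Ms s \<le> assoc_weight Ms' t - ereal (ln F)"
      unfolding assoc_weight_eq_SUP_weight_quotient[of Ms s] by (auto intro: SUP_least)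
    then show ?thesis
      by (cases "assoc_weight Ms s"; cases "assoc_weight Ms' t") auto
  qed
  then have "exp_ereal (assoc_weight Ms s + ereal (ln F)) \<le> exp_assoc_weight Ms' t"
    unfolding exp_assoc_weight_def by (rule exp_ereal_mono)
  then show ?thesis
    using F by (simp add: exp_ereal_add_ereal exp_assoc_weight_def)
qed

section \<open>Iterating the shift condition\<close>

definition beurling_derivation_closed :: "(real \<Rightarrow> ('d::finite \<Rightarrow> nat) \<Rightarrow> real) \<Rightarrow> bool" where
  "beurling_derivation_closed M \<longleftrightarrow> (\<forall>lam>0. \<exists>kap. 0 < kap \<and> kap \<le> lam \<and> (\<exists>A\<ge>1. \<forall>\<alpha> j.
     M kap (\<alpha>(j := \<alpha> j + 1)) \<le> A ^ (mi_length \<alpha> + 1) * M lam \<alpha>))"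

lemma prod_abs_divide_power:
  fixes t :: "'d::finite \<Rightarrow> real"
  shows "(\<Prod>i\<in>UNIV. \<bar>t i / A\<bar> ^ \<beta> i) = (\<Prod>i\<in>UNIV. \<bar>t i\<bar> ^ \<beta> i) / \<bar>A\<bar> ^ mi_length \<beta>"
  by (simp add: mi_length_def power_sum abs_divide power_divide prod_dividef)

lemma prod_abs_power_upd_Suc:
  fixes t :: "'d::finite \<Rightarrow> real"
  shows "(\<Prod>i\<in>UNIV. \<bar>t i\<bar> ^ (\<beta>(j := \<beta> j + 1)) i) = \<bar>t j\<bar> * (\<Prod>i\<in>UNIV. \<bar>t i\<bar> ^ \<beta> i)"
proof -
  have "(\<Prod>i\<in>UNIV. \<bar>t i\<bar> ^ (\<beta>(j := \<beta> j + 1)) i)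
      = (\<Prod>i\<in>UNIV. \<bar>t i\<bar> ^ \<beta> i * (if i = j then \<bar>t j\<bar> else 1))"
    by (intro prod.cong) auto
  then show ?thesis
    by (simp add: prod.distrib)
qed

text \<open>If \<open>\<bar>t j\<bar> \<ge> A\<close>, raising \<open>\<beta> j\<close> by one turns the factor \<open>\<bar>t j\<bar> / A\<close> into
  a quotient for \<open>Ms'\<close>; otherwise \<open>\<beta>\<close> itself will do.\<close>

lemma weight_quotient_shift_step:
  assumes pos: "\<And>\<beta>. 0 < Ms \<beta>" "\<And>\<beta>. 0 < Ms' \<beta>" and mono: "\<And>\<beta>. Ms' \<beta> \<le> Ms \<beta>"
    and A: "1 \<le> A"
    and shift: "\<And>\<alpha> j. Ms' (\<alpha>(j := \<alpha> j + 1)) \<le> A ^ (mi_length \<alpha> + 1) * Ms \<alpha>"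
    and adm: "admissible_index t \<beta>"
  shows "\<exists>\<gamma>. admissible_index t \<gamma> \<and>
    max 1 (\<bar>t j\<bar> / A) * weight_quotient Ms (\<lambda>i. t i / A) \<beta> \<le> weight_quotient Ms' t \<gamma>"
proof (cases "A \<le> \<bar>t j\<bar>")
  case True
  define \<gamma> where "\<gamma> = \<beta>(j := \<beta> j + 1)"
  define T where "T = (\<Prod>i\<in>UNIV. \<bar>t i\<bar> ^ \<beta> i)"
  have "admissible_index t \<gamma>"
    using adm True A unfolding admissible_index_def \<gamma>_def by auto
  moreover have "max 1 (\<bar>t j\<bar> / A) * weight_quotient Ms (\<lambda>i. t i / A) \<beta>
      = (\<bar>t j\<bar> * T) / (A ^ (mi_length \<beta> + 1) * Ms \<beta>)"
    using True A unfolding weight_quotient_def prod_abs_divide_power T_def[symmetric]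
    by (simp add: field_simps max_def)
  moreover have "\<dots> \<le> (\<bar>t j\<bar> * T) / Ms' \<gamma>"
    unfolding \<gamma>_def T_def using shift[of \<beta> j] pos A
    by (intro divide_left_mono mult_nonneg_nonneg prod_nonneg mult_pos_pos) auto
  moreover have "\<dots> = weight_quotient Ms' t \<gamma>"
    unfolding weight_quotient_def \<gamma>_def prod_abs_power_upd_Suc T_def ..
  ultimately show ?thesis
    by auto
next
  case False
  then have "max 1 (\<bar>t j\<bar> / A) * weight_quotient Ms (\<lambda>i. t i / A) \<beta>
      = weight_quotient Ms (\<lambda>i. t i / A) \<beta>"
    using A by (simp add: max_def divide_le_eq)
  also have "\<dots> \<le> weight_quotient Ms t \<beta>"
    using A pos(1) by (intro weight_quotient_mono) (auto simp: abs_divide divide_le_eq mult_le_cancel_left1)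
  also have "\<dots> \<le> weight_quotient Ms' t \<beta>"
    using pos(2) mono by (rule weight_quotient_antimono_weight)
  finally show ?thesis
    using adm by blast
qed

lemma weight_quotient_shift_iterate:
  fixes M :: "real \<Rightarrow> ('d::finite \<Rightarrow> nat) \<Rightarrow> real"
  assumes wm: "weight_matrix M" and dc: "beurling_derivation_closed M" and lam: "0 < lam"
  shows "\<exists>kap B. 0 < kap \<and> kap \<le> lam \<and> 1 \<le> B \<and> (\<forall>t \<beta>. admissible_index t \<beta> \<longrightarrow>
    (\<exists>\<gamma>. admissible_index t \<gamma> \<and> (\<Prod>j\<leftarrow>js. max 1 (\<bar>t j\<bar> / B)) *
        weight_quotient (M lam) (\<lambda>i. t i / B) \<beta> \<le> weight_quotient (M kap) t \<gamma>))"
  using lam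
proof (induction js arbitrary: lam)
  case Nil
  then show ?case
    by (intro exI[of _ lam] exI[of _ 1]) auto
next
  case (Cons j js)
  obtain k1 B1 where k1: "0 < k1" "k1 \<le> lam" "1 \<le> B1" and IH: "\<And>t \<beta>. admissible_index t \<beta> \<Longrightarrow>
      \<exists>\<gamma>. admissible_index t \<gamma> \<and> (\<Prod>j\<leftarrow>js. max 1 (\<bar>t j\<bar> / B1)) *
        weight_quotient (M lam) (\<lambda>i. t i / B1) \<beta> \<le> weight_quotient (M k1) t \<gamma>"
    using Cons by blast
  obtain k2 A where k2: "0 < k2" "k2 \<le> k1" "1 \<le> A"
    and shift: "\<And>\<alpha> j. M k2 (\<alpha>(j := \<alpha> j + 1)) \<le> A ^ (mi_length \<alpha> + 1) * M k1 \<alpha>"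
    using dc k1(1) unfolding beurling_derivation_closed_def by blast
  define B where "B = A * B1"
  have "\<exists>\<gamma>. admissible_index t \<gamma> \<and> (\<Prod>j\<leftarrow>j # js. max 1 (\<bar>t j\<bar> / B)) *
      weight_quotient (M lam) (\<lambda>i. t i / B) \<beta> \<le> weight_quotient (M k2) t \<gamma>"
    if adm: "admissible_index t \<beta>" for t \<beta>
  proof -
    define t' where "t' i = t i / A" for i
    have "admissible_index t' \<beta>"
      using adm k2 unfolding admissible_index_def t'_def by auto
    then obtain \<gamma>1 where "admissible_index t' \<gamma>1"
      and \<gamma>1: "(\<Prod>j\<leftarrow>js. max 1 (\<bar>t' j\<bar> / B1)) * weight_quotient (M lam) (\<lambda>i. t' i / B1) \<beta>
        \<le> weight_quotient (M k1) t' \<gamma>1"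
      using IH by blast
    then have "admissible_index t \<gamma>1"
      using k2 unfolding admissible_index_def t'_def by auto
    then obtain \<gamma> where \<gamma>: "admissible_index t \<gamma>"
      "max 1 (\<bar>t j\<bar> / A) * weight_quotient (M k1) t' \<gamma>1 \<le> weight_quotient (M k2) t \<gamma>"
      using weight_quotient_shift_step[of "M k1" "M k2" A] weight_matrix_pos[OF wm]
        weight_matrix_mono[OF wm k2(1,2)] k1 k2 shift unfolding t'_def by blast
    have t'_B1: "\<bar>t' i\<bar> / B1 = \<bar>t i\<bar> / B" "t' i / B1 = t i / B" for i
      using k2 unfolding t'_def B_def by (simp_all add: abs_divide)
    have "max 1 (\<bar>t j\<bar> / B) \<le> max 1 (\<bar>t j\<bar> / A)"
      using k1 k2 unfolding B_def by (intro max.mono) (auto simp: field_simps mult_le_cancel_right1)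
    moreover have "(\<Prod>j\<leftarrow>js. max 1 (\<bar>t j\<bar> / B)) * weight_quotient (M lam) (\<lambda>i. t i / B) \<beta>
        \<le> weight_quotient (M k1) t' \<gamma>1"
      using \<gamma>1 unfolding t'_B1 .
    moreover have "0 \<le> (\<Prod>j\<leftarrow>js. max 1 (\<bar>t j\<bar> / B)) * weight_quotient (M lam) (\<lambda>i. t i / B) \<beta>"
      using weight_matrix_pos[OF wm Cons.prems]
      by (intro mult_nonneg_nonneg prod_list_nonneg weight_quotient_nonneg) auto
    ultimately have "(\<Prod>j\<leftarrow>j # js. max 1 (\<bar>t j\<bar> / B)) * weight_quotient (M lam) (\<lambda>i. t i / B) \<beta>
        \<le> max 1 (\<bar>t j\<bar> / A) * weight_quotient (M k1) t' \<gamma>1"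
      by (simp add: mult.assoc mult_mono)
    with \<gamma> show ?thesis
      by (blast intro: order.trans)
  qed
  moreover have "1 \<le> B"
    using mult_mono[of 1 A 1 B1] k1 k2 unfolding B_def by simp
  ultimately show ?case
    using k1 k2 by (intro exI[of _ k2] exI[of _ B]) auto
qed

lemma exp_assoc_weight_shift_power:
  fixes M :: "real \<Rightarrow> ('d::finite \<Rightarrow> nat) \<Rightarrow> real"
  assumes wm: "weight_matrix M" and dc: "beurling_derivation_closed M" and lam: "0 < lam"
  obtains kap B where "0 < kap" "1 \<le> B" "\<And>kap' s t. 0 < kap' \<Longrightarrow> kap' \<le> kap \<Longrightarrow>
    (\<And>j. B * \<bar>s j\<bar> \<le> \<bar>t j\<bar>) \<Longrightarrow>
    ereal ((\<Prod>j\<in>UNIV. max 1 (\<bar>t j\<bar> / B)) ^ N) * exp_assoc_weight (M lam) s \<le> exp_assoc_weight (M kap') t"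
proof -
  obtain xs :: "'d list" where xs: "set xs = UNIV" "distinct xs"
    using finite_distinct_list[of "UNIV :: 'd set"] by auto
  have prod_xs: "(\<Prod>j\<leftarrow>concat (replicate N xs). f j) = (\<Prod>j\<in>UNIV. f j) ^ N" for f :: "'d \<Rightarrow> real"
    using prod.distinct_set_conv_list[OF xs(2), of f] xs(1) by (induction N) simp_all
  obtain kap B where kap: "0 < kap" "1 \<le> B" and iter: "\<And>t \<beta>. admissible_index t \<beta> \<Longrightarrow>
      \<exists>\<gamma>. admissible_index t \<gamma> \<and> (\<Prod>j\<in>UNIV. max 1 (\<bar>t j\<bar> / B)) ^ N *
        weight_quotient (M lam) (\<lambda>i. t i / B) \<beta> \<le> weight_quotient (M kap) t \<gamma>"
    using weight_quotient_shift_iterate[OF wm dc lam, of "concat (replicate N xs)"]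
    unfolding prod_xs by blast
  have "ereal ((\<Prod>j\<in>UNIV. max 1 (\<bar>t j\<bar> / B)) ^ N) * exp_assoc_weight (M lam) s
      \<le> exp_assoc_weight (M kap') t"
    if kap': "0 < kap'" "kap' \<le> kap" and st: "\<And>j. B * \<bar>s j\<bar> \<le> \<bar>t j\<bar>" for kap' s t
  proof (rule exp_assoc_weight_scaled_le[OF _ weight_matrix_pos[OF wm lam]])
    show "0 < (\<Prod>j\<in>UNIV. max 1 (\<bar>t j\<bar> / B)) ^ N"
      by (intro zero_less_power prod_pos) auto
    fix \<beta> assume "admissible_index s \<beta>"
    moreover have "s j = 0" if "t j = 0" for j
      using st[of j] kap that by (auto simp: mult_le_0_iff)
    ultimately have "admissible_index t \<beta>"
      unfolding admissible_index_def by blast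
    then obtain \<gamma> where \<gamma>: "admissible_index t \<gamma>" and iter_\<gamma>: "(\<Prod>j\<in>UNIV. max 1 (\<bar>t j\<bar> / B)) ^ N *
        weight_quotient (M lam) (\<lambda>i. t i / B) \<beta> \<le> weight_quotient (M kap) t \<gamma>"
      using iter by blast
    have "weight_quotient (M lam) s \<beta> \<le> weight_quotient (M lam) (\<lambda>i. t i / B) \<beta>"
      using st kap weight_matrix_pos[OF wm lam]
      by (intro weight_quotient_mono) (auto simp: abs_divide field_simps)
    then have "(\<Prod>j\<in>UNIV. max 1 (\<bar>t j\<bar> / B)) ^ N * weight_quotient (M lam) s \<beta>
        \<le> (\<Prod>j\<in>UNIV. max 1 (\<bar>t j\<bar> / B)) ^ N * weight_quotient (M lam) (\<lambda>i. t i / B) \<beta>"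
      by (intro mult_left_mono zero_le_power prod_nonneg) auto
    also have "\<dots> \<le> weight_quotient (M kap) t \<gamma>"
      by (rule iter_\<gamma>)
    also have "\<dots> \<le> weight_quotient (M kap') t \<gamma>"
      using weight_matrix_pos[OF wm kap'(1)] weight_matrix_mono[OF wm kap']
      by (rule weight_quotient_antimono_weight)
    finally show "\<exists>\<gamma>. admissible_index t \<gamma> \<and> (\<Prod>j\<in>UNIV. max 1 (\<bar>t j\<bar> / B)) ^ N *
        weight_quotient (M lam) s \<beta> \<le> weight_quotient (M kap') t \<gamma>"
      using \<gamma> by blast
  qed
  with kap that show ?thesis
    by blast
qed

section \<open>Growth of the weights\<close>

definition seq_weight :: "(('d::finite \<Rightarrow> nat) \<Rightarrow> real) \<Rightarrow> real \<Rightarrow> ('d \<Rightarrow> nat) \<Rightarrow> ereal" where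
  "seq_weight Ms h \<alpha> = exp_assoc_weight Ms (\<lambda>j. sqrt (real (\<alpha> j)) / h)"

definition poly_factor :: "('d::finite \<Rightarrow> nat) \<Rightarrow> real" where
  "poly_factor \<alpha> = (\<Prod>j\<in>UNIV. ((1 + real (\<alpha> j)) / 2) ^ 2)"

lemma poly_factor_pos: "0 < poly_factor \<alpha>"
  unfolding poly_factor_def by (intro prod_pos) (auto simp: add_pos_nonneg)

lemma poly_factor_le_prod_max:
  assumes "\<And>j. sqrt (real (\<alpha> j)) \<le> u j"
  shows "poly_factor \<alpha> \<le> (\<Prod>j\<in>UNIV. max 1 (u j)) ^ 4"
  unfolding poly_factor_def prod_power_distrib
proof (intro prod_mono conjI)
  fix j
  have "max 1 (sqrt (real (\<alpha> j))) ^ 2 = max 1 (real (\<alpha> j))"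
    by (simp add: max_def)
  moreover have "((1 + real (\<alpha> j)) / 2) ^ 2 \<le> (max 1 (real (\<alpha> j))) ^ 2"
    by (intro power_mono) auto
  ultimately have "((1 + real (\<alpha> j)) / 2) ^ 2 \<le> (max 1 (sqrt (real (\<alpha> j))) ^ 2) ^ 2"
    by simp
  also have "\<dots> = (max 1 (sqrt (real (\<alpha> j)))) ^ 4"
    by (simp flip: power_mult)
  also have "\<dots> \<le> (max 1 (u j)) ^ 4"
    using assms[of j] by (intro power_mono max.mono) auto
  finally show "((1 + real (\<alpha> j)) / 2) ^ 2 \<le> (max 1 (u j)) ^ 4" .
qed simp

lemma seq_weight_growth:
  fixes M :: "real \<Rightarrow> ('d::finite \<Rightarrow> nat) \<Rightarrow> real"
  assumes wm: "weight_matrix M" and dc: "beurling_derivation_closed M"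
    and lam: "0 < lam" and h: "0 < h"
  obtains kap c where "0 < kap" "0 < c" "\<And>kap' h' \<alpha>. 0 < kap' \<Longrightarrow> kap' \<le> kap \<Longrightarrow> 0 < h' \<Longrightarrow> h' \<le> c \<Longrightarrow>
    ereal (poly_factor \<alpha>) * seq_weight (M lam) h \<alpha> \<le> seq_weight (M kap') h' \<alpha>"
proof -
  obtain kap B where kap: "0 < kap" "1 \<le> B" and shift: "\<And>kap' s t. 0 < kap' \<Longrightarrow> kap' \<le> kap \<Longrightarrow>
      (\<And>j. B * \<bar>s j\<bar> \<le> \<bar>t j\<bar>) \<Longrightarrow> ereal ((\<Prod>j\<in>UNIV. max 1 (\<bar>t j\<bar> / B)) ^ 4) *
        exp_assoc_weight (M lam) s \<le> exp_assoc_weight (M kap') t"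
    using exp_assoc_weight_shift_power[OF wm dc lam] by blast
  define c where "c = min h 1 / B"
  have "ereal (poly_factor \<alpha>) * seq_weight (M lam) h \<alpha> \<le> seq_weight (M kap') h' \<alpha>"
    if kap': "0 < kap'" "kap' \<le> kap" and h': "0 < h'" "h' \<le> c" for kap' h' \<alpha>
  proof -
    define s where "s j = sqrt (real (\<alpha> j)) / h" for j
    define t where "t j = sqrt (real (\<alpha> j)) / h'" for j
    have h'B: "h' * B \<le> h" "h' * B \<le> 1"
      using h' kap unfolding c_def by (auto simp: field_simps)
    have st: "B * \<bar>s j\<bar> \<le> \<bar>t j\<bar>" for j
    proof -
      have "sqrt (real (\<alpha> j)) * (h' * B) \<le> sqrt (real (\<alpha> j)) * h"
        using h'B by (intro mult_left_mono) auto
      then show ?thesis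
        using h h' unfolding s_def t_def by (simp add: field_simps)
    qed
    have "poly_factor \<alpha> \<le> (\<Prod>j\<in>UNIV. max 1 (\<bar>t j\<bar> / B)) ^ 4"
    proof (rule poly_factor_le_prod_max)
      fix j
      have "sqrt (real (\<alpha> j)) * (h' * B) \<le> sqrt (real (\<alpha> j))"
        using h' kap h'B by (intro mult_left_le) auto
      then show "sqrt (real (\<alpha> j)) \<le> \<bar>t j\<bar> / B"
        using h' kap unfolding t_def by (simp add: field_simps)
    qed
    then have "ereal (poly_factor \<alpha>) * exp_assoc_weight (M lam) s
        \<le> ereal ((\<Prod>j\<in>UNIV. max 1 (\<bar>t j\<bar> / B)) ^ 4) * exp_assoc_weight (M lam) s"
      by (intro ereal_mult_right_mono) (simp_all add: exp_assoc_weight_def exp_ereal_nonneg)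
    also have "\<dots> \<le> exp_assoc_weight (M kap') t"
      by (rule shift[OF kap' st])
    finally show ?thesis
      unfolding seq_weight_def s_def[abs_def] t_def[abs_def] .
  qed
  moreover have "0 < c"
    using h kap unfolding c_def by simp
  ultimately show ?thesis
    using kap that by blast
qed

lemma seq_weight_growth_diagonal:
  fixes M :: "real \<Rightarrow> ('d::finite \<Rightarrow> nat) \<Rightarrow> real"
  assumes wm: "weight_matrix M" and dc: "beurling_derivation_closed M"
  shows "\<exists>m\<ge>n. \<forall>\<alpha>. ereal (poly_factor \<alpha>) * seq_weight (M (1 / real (Suc n))) (1 / real (Suc n)) \<alpha>
    \<le> seq_weight (M (1 / real (Suc m))) (1 / real (Suc m)) \<alpha>"
proof -
  obtain kap c where "0 < kap" "0 < c" and growth: "\<And>kap' h' \<alpha>. 0 < kap' \<Longrightarrow> kap' \<le> kap \<Longrightarrow>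
      0 < h' \<Longrightarrow> h' \<le> c \<Longrightarrow> ereal (poly_factor \<alpha>) *
        seq_weight (M (1 / real (Suc n))) (1 / real (Suc n)) \<alpha> \<le> seq_weight (M kap') h' \<alpha>"
    using seq_weight_growth[OF wm dc, of "1 / real (Suc n)" "1 / real (Suc n)"] by auto
  then obtain m0 where "inverse (real (Suc m0)) < min kap c"
    using reals_Archimedean[of "min kap c"] by auto
  moreover have "1 / real (Suc (max n m0)) \<le> inverse (real (Suc m0))"
    by (simp add: divide_inverse le_imp_inverse_le)
  ultimately have "1 / real (Suc (max n m0)) \<le> min kap c"
    by linarith
  then show ?thesis
    by (intro exI[of _ "max n m0"] conjI allI growth) auto
qed

lemma bij_nat_multi_index: "\<exists>e :: nat \<Rightarrow> ('d::finite \<Rightarrow> nat). bij e"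
proof -
  have "inj (\<lambda>k::nat. (\<lambda>_::'d. k))"
    by (rule injI) (metis)
  then have "infinite (UNIV :: ('d \<Rightarrow> nat) set)"
    using range_inj_infinite infinite_super subset_UNIV by metis
  then show ?thesis
    using bij_betw_from_nat_into[of "UNIV :: ('d \<Rightarrow> nat) set"] by auto
qed

lemma inverse_poly_factor_eq: "1 / poly_factor \<alpha> = (\<Prod>j\<in>UNIV. 4 / (1 + real (\<alpha> j)) ^ 2)"
  unfolding poly_factor_def by (simp add: prod_dividef power_divide)

lemma summable_inverse_poly_factor:
  assumes "bij (e :: nat \<Rightarrow> ('d::finite \<Rightarrow> nat))"
  shows "summable (\<lambda>k. 1 / poly_factor (e k))"
proof -
  have "summable (\<lambda>k::nat. inverse (real k ^ 2))"
    by (rule inverse_power_summable) simp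
  then have "summable (\<lambda>k. 4 * inverse (real (Suc k) ^ 2))"
    by (subst (asm) summable_Suc_iff[symmetric]) (rule summable_mult)
  then have "Infinite_Set_Sum.abs_summable_on (\<lambda>k::nat. 4 / (1 + real k) ^ 2) UNIV"
    by (subst Infinite_Set_Sum.abs_summable_on_nat_iff') (simp add: field_simps)
  then have "Infinite_Set_Sum.abs_summable_on (\<lambda>\<alpha>::'d \<Rightarrow> nat. \<Prod>j\<in>UNIV. 4 / (1 + real (\<alpha> j)) ^ 2)
      (PiE UNIV (\<lambda>_. UNIV))"
    by (intro Infinite_Set_Sum.abs_summable_on_prod_PiE) auto
  then have "Infinite_Set_Sum.abs_summable_on (\<lambda>\<alpha>::'d \<Rightarrow> nat. 1 / poly_factor \<alpha>) UNIV"
    by (simp add: inverse_poly_factor_eq)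
  then have "Infinite_Set_Sum.abs_summable_on (\<lambda>k. 1 / poly_factor (e k)) UNIV"
    using Infinite_Set_Sum.abs_summable_on_reindex_bij_betw[OF assms, of "\<lambda>\<alpha>. 1 / poly_factor \<alpha>"] by blast
  then show ?thesis
    by (simp add: Infinite_Set_Sum.abs_summable_on_nat_iff' poly_factor_pos abs_of_pos)
qed

lemma seq_weight_pos:
  assumes "weight_matrix M" "0 < lam"
  shows "0 < seq_weight (M lam) h \<alpha>"
proof -
  have "1 \<le> seq_weight (M lam) h \<alpha>"
    unfolding seq_weight_def using assms by (intro exp_assoc_weight_ge_1 weight_matrix_zero)
  then show ?thesis
    by (cases "seq_weight (M lam) h \<alpha>") auto
qed

section \<open>Weighted sup norms and nuclearity\<close>

definition weighted_sup :: "('i \<Rightarrow> ereal) \<Rightarrow> ('i \<Rightarrow> complex) \<Rightarrow> ereal" where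
  "weighted_sup w x = (SUP i. ereal (cmod (x i)) * w i)"

definition unit_seq :: "'i \<Rightarrow> 'i \<Rightarrow> complex" where
  "unit_seq i = (\<lambda>j. if j = i then 1 else 0)"

lemma weighted_sup_ge: "ereal (cmod (x i)) * w i \<le> weighted_sup w x"
  unfolding weighted_sup_def by (rule SUP_upper) simp

lemma weighted_sup_le: "(\<And>i. ereal (cmod (x i)) * w i \<le> b) \<Longrightarrow> weighted_sup w x \<le> b"
  unfolding weighted_sup_def by (rule SUP_least)

lemma weighted_sup_nonneg: "(\<And>i. 0 \<le> w i) \<Longrightarrow> 0 \<le> weighted_sup w x"
  using weighted_sup_ge[of x undefined w] by (meson ereal_0_le_mult norm_ge_zero ereal_less_eq(5) order_trans)

lemma weighted_sup_zero [simp]: "weighted_sup w (\<lambda>_. 0) = 0"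
  unfolding weighted_sup_def by (simp add: zero_ereal_def[symmetric])

lemma weighted_sup_unit_seq: "(\<And>i. 0 \<le> w i) \<Longrightarrow> weighted_sup w (unit_seq i) = w i"
  by (intro antisym weighted_sup_le)
    (use weighted_sup_ge[of "unit_seq i" i w] in \<open>auto simp: unit_seq_def zero_ereal_def[symmetric]\<close>)

lemma weighted_sup_finite_imp_zero:
  assumes "weighted_sup w x < \<infinity>" "w i = \<infinity>"
  shows "x i = 0"
  using weighted_sup_ge[of x i w] assms by (cases "x i = 0") auto

lemma norm_le_weighted_sup_divide:
  assumes fin: "weighted_sup w x < \<infinity>" and pos: "0 < w i"
  shows "cmod (x i) \<le> real_of_ereal (weighted_sup w x) / real_of_ereal (w i)"
proof (cases "w i")
  case (real r)
  have "ereal (cmod (x i) * r) \<le> weighted_sup w x"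
    using weighted_sup_ge[of x i w] real by simp
  then have "cmod (x i) * r \<le> real_of_ereal (weighted_sup w x)"
    using fin by (cases "weighted_sup w x") auto
  then show ?thesis
    using pos real by (simp add: field_simps)
qed (use assms weighted_sup_finite_imp_zero in auto)

lemma weight_ratio_le:
  assumes "0 < wn" "0 < F" "ereal F * wn \<le> wm"
  shows "0 < wm" and "real_of_ereal wn / real_of_ereal wm \<le> 1 / F"
proof -
  show "0 < wm"
    using assms ereal_zero_less_0_iff[of "ereal F" wn] by auto
  show "real_of_ereal wn / real_of_ereal wm \<le> 1 / F"
  proof (cases "wm = \<infinity>")
    case False
    then obtain a b where "wn = ereal a" "wm = ereal b"
      using assms by (cases wn; cases wm) auto
    moreover have "0 < b"
      using \<open>0 < wm\<close> \<open>wm = ereal b\<close> by simp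
    ultimately show ?thesis
      using assms by (simp add: field_simps)
  qed (use assms in simp)
qed

lemma norm_mult_weight_le_weighted_sup_divide:
  assumes fin: "weighted_sup wm x < \<infinity>" and wn: "0 < wn i" and F: "0 < F"
    and dom: "ereal F * wn i \<le> wm i"
  shows "ereal (cmod (x i)) * wn i \<le> ereal (real_of_ereal (weighted_sup wm x) / F)"
proof (cases "wm i = \<infinity>")
  case True
  then have "x i = 0"
    using weighted_sup_finite_imp_zero[OF fin] by blast
  moreover have "0 \<le> weighted_sup wm x"
    using weighted_sup_ge[of x i wm] \<open>x i = 0\<close> by (simp add: zero_ereal_def[symmetric])
  ultimately show ?thesis
    using F by (simp add: zero_ereal_def[symmetric] real_of_ereal_pos)
next
  case False
  have wm: "0 < wm i" and ratio: "real_of_ereal (wn i) / real_of_ereal (wm i) \<le> 1 / F"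
    using weight_ratio_le[OF wn F dom] by auto
  obtain a b where a: "wn i = ereal a" "0 < a" and b: "wm i = ereal b" "0 < b"
    using False wn wm dom F by (cases "wn i"; cases "wm i") auto
  define q where "q = real_of_ereal (weighted_sup wm x)"
  have "cmod (x i) \<le> q / b"
    using norm_le_weighted_sup_divide[OF fin wm] b unfolding q_def by simp
  then have "0 \<le> q / b"
    by (rule order.trans[OF norm_ge_zero])
  then have "0 \<le> q"
    using b by (simp add: zero_le_divide_iff)
  have "cmod (x i) * a \<le> q * (a / b)"
    using mult_right_mono[OF \<open>cmod (x i) \<le> q / b\<close>, of a] a by simp
  also have "\<dots> \<le> q * (1 / F)"
    using ratio a b \<open>0 \<le> q\<close> by (intro mult_left_mono) auto
  finally show ?thesis
    using a unfolding q_def by simp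
qed

lemma tendsto_weighted_sup_tail:
  fixes e :: "nat \<Rightarrow> 'i"
  assumes "bij e" and w: "\<And>i. 0 \<le> w i"
    and bound: "\<And>k. ereal (cmod (x (e k))) * w (e k) \<le> ereal (b k)" and "b \<longlonglongrightarrow> 0"
  shows "(\<lambda>N. real_of_ereal (weighted_sup w (\<lambda>i. if inv e i < N then 0 else x i))) \<longlonglongrightarrow> 0"
proof (rule LIMSEQ_I)
  fix r :: real assume "0 < r"
  then obtain K where K: "\<And>k. K \<le> k \<Longrightarrow> \<bar>b k\<bar> < r / 2"
    using LIMSEQ_D[OF \<open>b \<longlonglongrightarrow> 0\<close>, of "r / 2"] by auto
  have "norm (real_of_ereal (weighted_sup w (\<lambda>i. if inv e i < N then 0 else x i))) < r"
    if "K \<le> N" for N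
  proof -
    have "ereal (cmod (if inv e i < N then 0 else x i)) * w i \<le> ereal (r / 2)" for i
    proof (cases "inv e i < N")
      case False
      then have "b (inv e i) < r / 2"
        using K[of "inv e i"] that by linarith
      moreover have "e (inv e i) = i"
        using \<open>bij e\<close> by (simp add: bij_is_surj surj_f_inv_f)
      ultimately show ?thesis
        using False bound[of "inv e i"] by (auto elim!: order.trans)
    qed (use \<open>0 < r\<close> in \<open>simp add: zero_ereal_def[symmetric]\<close>)
    then have "weighted_sup w (\<lambda>i. if inv e i < N then 0 else x i) \<le> ereal (r / 2)"
      by (rule weighted_sup_le)
    moreover have "0 \<le> weighted_sup w (\<lambda>i. if inv e i < N then 0 else x i)"
      using w by (rule weighted_sup_nonneg)
    ultimately show ?thesis
      using \<open>0 < r\<close> by (cases "weighted_sup w (\<lambda>i. if inv e i < N then 0 else x i)") auto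
  qed
  then show "\<exists>K. \<forall>N\<ge>K. norm (real_of_ereal (weighted_sup w (\<lambda>i. if inv e i < N then 0 else x i)) - 0) < r"
    by auto
qed

lemma canonical_map_nuclear_weighted_sup:
  fixes E :: "('i \<Rightarrow> complex) set" and wn wm :: "'i \<Rightarrow> ereal"
    and F :: "'i \<Rightarrow> real" and e :: "nat \<Rightarrow> 'i"
  assumes e: "bij e"
    and E_zero: "(\<lambda>_. 0) \<in> E"
    and E_units: "\<And>i. unit_seq i \<in> E \<or> (\<forall>x\<in>E. x i = 0)"
    and E_finite: "\<And>x. x \<in> E \<Longrightarrow> weighted_sup wm x < \<infinity>"
    and wn_pos: "\<And>i. 0 < wn i" and F_pos: "\<And>i. 0 < F i"
    and dom: "\<And>i. ereal (F i) * wn i \<le> wm i"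
    and summable: "summable (\<lambda>k. 1 / F (e k))"
  shows "canonical_map_nuclear E (\<lambda>x. real_of_ereal (weighted_sup wn x))
    (\<lambda>x. real_of_ereal (weighted_sup wm x))"
proof -
  define p where "p x = real_of_ereal (weighted_sup wn x)" for x
  define q where "q x = real_of_ereal (weighted_sup wm x)" for x
  define f where "f k x = x (e k)" for k and x :: "'i \<Rightarrow> complex"
  \<comment> \<open>A unit vector outside \<open>E\<close> is replaced by \<open>0\<close>; its coordinate vanishes on \<open>E\<close> anyway.\<close>
  define z where "z k = (if unit_seq (e k) \<in> E then unit_seq (e k) else (\<lambda>_. 0))" for k
  define C where "C k = 1 / real_of_ereal (wm (e k))" for k
  have wm_pos: "0 < wm i" and ratio: "real_of_ereal (wn i) / real_of_ereal (wm i) \<le> 1 / F i" for i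
    using weight_ratio_le[OF wn_pos F_pos dom] by auto
  have coord: "cmod (x i) \<le> q x / real_of_ereal (wm i)" if "x \<in> E" for x i
    unfolding q_def using norm_le_weighted_sup_divide[OF E_finite[OF that] wm_pos] .
  have nuclear_terms: "0 \<le> C k * p (z k) \<and> C k * p (z k) \<le> 1 / F (e k)" for k
    using ratio[of "e k"] F_pos[of "e k"] wn_pos[of "e k"] wm_pos[of "e k"] wn_pos
    by (auto simp: C_def p_def z_def weighted_sup_unit_seq less_imp_le
        intro!: divide_nonneg_nonneg real_of_ereal_pos)
  have expansion: "(\<lambda>i. x i - (\<Sum>k<N. f k x * z k i)) = (\<lambda>i. if inv e i < N then 0 else x i)"
    if "x \<in> E" for x N
  proof
    fix i
    have "f k x * z k i = (if k = inv e i then x i else 0)" for k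
      using E_units[of "e k"] that e
      by (auto simp: f_def z_def unit_seq_def bij_inv_eq_iff)
    then show "x i - (\<Sum>k<N. f k x * z k i) = (if inv e i < N then 0 else x i)"
      by simp
  qed
  have "(\<lambda>N. p (\<lambda>i. x i - (\<Sum>k<N. f k x * z k i))) \<longlonglongrightarrow> 0" if "x \<in> E" for x
  proof -
    have "ereal (cmod (x (e k))) * wn (e k) \<le> ereal (q x / F (e k))" for k
      unfolding q_def using E_finite[OF that] wn_pos F_pos dom
      by (rule norm_mult_weight_le_weighted_sup_divide)
    moreover have "(\<lambda>k. q x / F (e k)) \<longlonglongrightarrow> 0"
      using tendsto_mult_right_zero[OF summable_LIMSEQ_zero[OF summable], of "q x"] by simp
    ultimately show ?thesis
      unfolding expansion[OF that] p_def
      by (intro tendsto_weighted_sup_tail[OF e]) (auto simp: less_imp_le wn_pos)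
  qed
  moreover have "summable (\<lambda>k. C k * p (z k))"
    using nuclear_terms by (intro summable_comparison_test'[OF summable]) auto
  moreover have "cmod (f k x) \<le> C k * q x" if "x \<in> E" for k x
    using coord[OF that, of "e k"] by (simp add: f_def C_def)
  moreover have "z k \<in> E" for k
    using E_zero by (simp add: z_def)
  ultimately show ?thesis
    unfolding canonical_map_nuclear_def p_def[symmetric] q_def[symmetric]
    by (intro exI[of _ f] exI[of _ z] exI[of _ C]) (auto simp: f_def)
qed

section \<open>The space \<open>\<Lambda>_(M)\<close>\<close>

lemma seq_norm_eq_weighted_sup: "seq_norm Ms h = weighted_sup (seq_weight Ms h)"
  unfolding seq_norm_def weighted_sup_def seq_weight_def exp_assoc_weight_def ..

lemma Lambda_norm_eq:
  "Lambda_norm M n = (\<lambda>x. real_of_ereal (weighted_sup (seq_weight (M (1 / real (Suc n))) (1 / real (Suc n))) x))"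
  unfolding Lambda_norm_def seq_norm_eq_weighted_sup ..

lemma Lambda_space_iff:
  "x \<in> Lambda_space M \<longleftrightarrow> (\<forall>lam>0. \<forall>h>0. weighted_sup (seq_weight (M lam) h) x < \<infinity>)"
  unfolding Lambda_space_def seq_norm_eq_weighted_sup by simp

lemma unit_seq_in_Lambda_space_or_vanishes:
  "unit_seq i \<in> Lambda_space M \<or> (\<forall>x\<in>Lambda_space M. x i = 0)"
proof (cases "unit_seq i \<in> Lambda_space M")
  case False
  then obtain lam h where "0 < lam" "0 < h" "\<not> weighted_sup (seq_weight (M lam) h) (unit_seq i) < \<infinity>"
    unfolding Lambda_space_iff by blast
  then have "seq_weight (M lam) h i = \<infinity>"
    using weighted_sup_unit_seq[of "seq_weight (M lam) h" i]
    by (simp add: seq_weight_def exp_assoc_weight_def exp_ereal_nonneg)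
  then have "x i = 0" if "x \<in> Lambda_space M" for x
    using weighted_sup_finite_imp_zero[of "seq_weight (M lam) h" x i] that \<open>0 < lam\<close> \<open>0 < h\<close>
    by (simp add: Lambda_space_iff)
  then show ?thesis
    by blast
qed simp

theorem theorem5p3:
  fixes M :: "real \<Rightarrow> ('d::finite \<Rightarrow> nat) \<Rightarrow> real"
  assumes "weight_matrix M"
    and "\<forall>lam>0. \<exists>kap. 0 < kap \<and> kap \<le> lam \<and> (\<exists>A\<ge>1. \<forall>\<alpha> j.
           M kap (\<alpha>(j := \<alpha> j + 1)) \<le> A ^ (mi_length \<alpha> + 1) * M lam \<alpha>)"
  shows "nuclear_seq_space (Lambda_space M) (Lambda_norm M)"
  unfolding nuclear_seq_space_def
proof
  fix n
  define w where "w k = seq_weight (M (1 / real (Suc k))) (1 / real (Suc k))" for k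
  have dc: "beurling_derivation_closed M"
    using assms(2) unfolding beurling_derivation_closed_def .
  obtain m where "n \<le> m" and growth: "\<And>\<alpha>. ereal (poly_factor \<alpha>) * w n \<alpha> \<le> w m \<alpha>"
    using seq_weight_growth_diagonal[OF assms(1) dc] unfolding w_def by blast
  obtain e :: "nat \<Rightarrow> 'd \<Rightarrow> nat" where e: "bij e"
    using bij_nat_multi_index by blast
  have "(\<lambda>_. 0) \<in> Lambda_space M" and "\<And>x. x \<in> Lambda_space M \<Longrightarrow> weighted_sup (w m) x < \<infinity>"
    by (auto simp: Lambda_space_iff w_def)
  moreover have "0 < w n \<alpha>" for \<alpha>
    unfolding w_def using assms(1) by (rule seq_weight_pos) simp
  ultimately have "canonical_map_nuclear (Lambda_space M) (Lambda_norm M n) (Lambda_norm M m)"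
    unfolding Lambda_norm_eq w_def[symmetric]
    using e unit_seq_in_Lambda_space_or_vanishes poly_factor_pos growth summable_inverse_poly_factor[OF e]
    by (intro canonical_map_nuclear_weighted_sup)
  with \<open>n \<le> m\<close> show "\<exists>m\<ge>n. canonical_map_nuclear (Lambda_space M) (Lambda_norm M n) (Lambda_norm M m)"
    by blast
qed

end
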